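(* Let $\bm A=(A_1,\dots,A_d)$ be Hermitian matrices in $M_n(\mathbb{C})$, $B\in M_n(\mathbb{C})$, and $(\bm\lambda,\nu)\in\mathbb{R}^d\times\mathbb{C}$. Suppose there is a unit vector $\bm\psi\in\mathbb{C}^n$ with $$2\sum_{i=1}^d\|A_i\bm\psi-\lambda_i\bm\psi\|^2+\|B\bm\psi-\nu\bm\psi\|^2+\|B^\dagger\bm\psi-\overline{\nu}\bm\psi\|^2\le\epsilon_1$$ and that $\sum_{i\neq k}\|[A_i,A_k]\|+\|F_{(\bm\lambda,\nu)}(\bm A,B)\|\le\epsilon_2$, for some $\epsilon_1,\epsilon_2\ge0$. Then $(\bm\lambda,\nu)\in\dot\Lambda^{C}_{\epsilon}(\bm A,B)$ with $\epsilon=\sqrt{\tfrac{1}{\sqrt2}\epsilon_1+\epsilon_2}$.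
   Context: Let $n,d,m$ be positive integers. Fix Hermitian matrices $\Gamma_1,\dots,\Gamma_d\in M_{2m}(\mathbb{C})$ with $\Gamma_i^2=I_{2m}$ and $\Gamma_i\Gamma_j=-\Gamma_j\Gamma_i$ for $i\neq j$ (a Clifford representation; the paper uses a specific one built from Pauli matrices). Write $P=\begin{bmatrix} I_m&0\\0&0_m\end{bmatrix}$ and $Q=\begin{bmatrix}0_m&0\\0&I_m\end{bmatrix}$ in $M_{2m}(\mathbb{C})$. For a $d$-tuple $\bm A=(A_1,\dots,A_d)$ of Hermitian matrices in $M_n(\mathbb{C})$, a matrix $B\in M_n(\mathbb{C})$ (not necessarily Hermitian or normal), and a probe site $(\bm\lambda,\nu)\in\mathbb{R}^d\times\mathbb{C}$, the non-Hermitian spectral localizer is $$L_{(\bm\lambda,\nu)}(\bm A,B)=\sum_{i=1}^d (A_i-\lambda_i I)\otimes\Gamma_i+(B-\nu I)\otimes P-(B-\nu I)^\dagger\otimes Q\in M_{2mn}(\mathbb{C}).$$ The Clifford radial gap is $\dot\mu^{C}_{(\bm\lambda,\nu)}(\bm A,B)=\sigma_{\min}\big(L_{(\bm\lambda,\nu)}(\bm A,B)\big)$, and the Clifford radial $\epsilon$-pseudospectrum is $\dot\Lambda^{C}_\epsilon(\bm A,B)=\{(\bm\lambda,\nu)\in\mathbb{R}^d\times\mathbb{C}:\dot\mu^{C}_{(\bm\lambda,\nu)}(\bm A,B)\le\epsilon\}$. Define $$F_{(\bm\lambda,\nu)}(\bm A,B)=\sum_{i=1}^d\big(G_i+G_i^\dagger\big)-\sum_{i=1}^d\big(H_i+H_i^\dagger\big),\quad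 G_i=(A_i-\lambda_i I)(B-\nu I)\otimes\Gamma_iP,\quad H_i=(A_i-\lambda_i I)(B-\nu I)^\dagger\otimes\Gamma_iQ.$$ All matrix norms are operator norms; vector norms are Euclidean. *)

theory Defs
  imports "HOL-Analysis.Analysis"
begin

text \<open>The 2m x 2m Clifford matrices are indexed by the sum type 'm::finite + 'm, whose
 first summand gives the upper-left block (P) and second the lower-right (Q).\<close>

definition adj :: "complex^'n^'m \<Rightarrow> complex^'m^'n" where
  "adj M = (\<chi> i j. cnj (M $ j $ i))"

definition kron :: "complex^'a^'a \<Rightarrow> complex^'b^'b \<Rightarrow> complex^('a \<times> 'b)^('a \<times> 'b)" where
  "kron M N = (\<chi> p q. M $ fst p $ fst q * N $ snd p $ snd q)"

definition Pblk :: "complex^('m::finite + 'm)^('m::finite + 'm)" where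
  "Pblk = (\<chi> i j. if i = j \<and> (\<exists>k. i = Inl k) then 1 else 0)"

definition Qblk :: "complex^('m::finite + 'm)^('m::finite + 'm)" where
  "Qblk = (\<chi> i j. if i = j \<and> (\<exists>k. i = Inr k) then 1 else 0)"

definition opnorm :: "complex^'n^'n \<Rightarrow> real" where
  "opnorm M = onorm (\<lambda>x. M *v x)"

definition sigma_min :: "complex^'n^'n \<Rightarrow> real" where
  "sigma_min M = Inf {norm (M *v x) | x. norm x = 1}"

definition is_clifford :: "nat \<Rightarrow> (nat \<Rightarrow> complex^('m::finite + 'm)^('m::finite + 'm)) \<Rightarrow> bool" where
  "is_clifford d \<Gamma> \<longleftrightarrow>
     (\<forall>i<d. adj (\<Gamma> i) = \<Gamma> i \<and> \<Gamma> i ** \<Gamma> i = mat 1) \<and>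
     (\<forall>i<d. \<forall>j<d. i \<noteq> j \<longrightarrow> \<Gamma> i ** \<Gamma> j = - (\<Gamma> j ** \<Gamma> i))"

text \<open>Non-Hermitian spectral localizer; lam :: nat => real represents the point of R^d
 (only the entries lam 0, ..., lam (d-1) are used).\<close>
definition localizer ::
  "nat \<Rightarrow> (nat \<Rightarrow> complex^('m::finite + 'm)^('m::finite + 'm)) \<Rightarrow> (nat \<Rightarrow> complex^'n^'n) \<Rightarrow> complex^'n^'n
   \<Rightarrow> (nat \<Rightarrow> real) \<Rightarrow> complex \<Rightarrow> complex^('n::finite \<times> ('m::finite + 'm))^('n::finite \<times> ('m::finite + 'm))" where
  "localizer d \<Gamma> A B lam \<nu> =
     (\<Sum>i<d. kron (A i - mat (complex_of_real (lam i))) (\<Gamma> i))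
     + kron (B - mat \<nu>) Pblk - kron (adj (B - mat \<nu>)) Qblk"

definition clifford_radial_gap where
  "clifford_radial_gap d \<Gamma> A B lam \<nu> = sigma_min (localizer d \<Gamma> A B lam \<nu>)"

definition clifford_radial_pseudospectrum ::
  "nat \<Rightarrow> (nat \<Rightarrow> complex^('m::finite + 'm)^('m::finite + 'm)) \<Rightarrow> (nat \<Rightarrow> complex^'n^'n) \<Rightarrow> complex^'n^'n
   \<Rightarrow> real \<Rightarrow> ((nat \<Rightarrow> real) \<times> complex) set" where
  "clifford_radial_pseudospectrum d \<Gamma> A B \<epsilon> =
     {(lam, \<nu>). clifford_radial_gap d \<Gamma> A B lam \<nu> \<le> \<epsilon>}"

definition Fmat ::
  "nat \<Rightarrow> (nat \<Rightarrow> complex^('m::finite + 'm)^('m::finite + 'm)) \<Rightarrow> (nat \<Rightarrow> complex^'n^'n) \<Rightarrow> complex^'n^'n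
   \<Rightarrow> (nat \<Rightarrow> real) \<Rightarrow> complex \<Rightarrow> complex^('n::finite \<times> ('m::finite + 'm))^('n::finite \<times> ('m::finite + 'm))" where
  "Fmat d \<Gamma> A B lam \<nu> =
     (let G = (\<lambda>i. kron ((A i - mat (complex_of_real (lam i))) ** (B - mat \<nu>)) (\<Gamma> i ** Pblk));
          H = (\<lambda>i. kron ((A i - mat (complex_of_real (lam i))) ** adj (B - mat \<nu>)) (\<Gamma> i ** Qblk))
      in (\<Sum>i<d. G i + adj (G i)) - (\<Sum>i<d. H i + adj (H i)))"

end

theory Submission
  imports Defs
begin

text \<open>
  Test the localizer on \<open>\<phi> = \<psi> \<otimes> e\<close>, where \<open>e\<close> is a unit vector with half of its
  weight in the range of \<open>P\<close> and half in that of \<open>Q\<close>. Writing \<open>L = S + W - V\<close> with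
  \<open>S = \<Sum> (A\<^sub>i - \<lambda>\<^sub>i) \<otimes> \<Gamma>\<^sub>i\<close>, the vectors \<open>W\<phi>\<close> and \<open>V\<phi>\<close> are orthogonal, so
  \<open>\<parallel>L\<phi>\<parallel>\<^sup>2 = \<parallel>S\<phi>\<parallel>\<^sup>2 + \<parallel>W\<phi>\<parallel>\<^sup>2 + \<parallel>V\<phi>\<parallel>\<^sup>2 + \<langle>\<phi>, F\<phi>\<rangle>\<close>, the cross terms \<open>SW, SV\<close> assembling
  exactly into \<open>F\<close>. Since the \<open>\<Gamma>\<^sub>i\<close> anticommute, the off-diagonal part of \<open>\<parallel>S\<phi>\<parallel>\<^sup>2\<close>
  only involves the commutators \<open>[A\<^sub>i, A\<^sub>k]\<close>, and the diagonal part is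
  \<open>\<Sum> \<parallel>A\<^sub>i\<psi> - \<lambda>\<^sub>i\<psi>\<parallel>\<^sup>2\<close>. Hence \<open>\<parallel>L\<phi>\<parallel>\<^sup>2 \<le> \<epsilon>\<^sub>1/2 + \<epsilon>\<^sub>2\<close>, which bounds the smallest
  singular value.
\<close>

lemma inner_complex_cnj: "inner (x::complex) y = Re (cnj x * y)"
  by (simp add: inner_complex_def)

lemma adj_adj [simp]: "adj (adj M) = M"
  by (simp add: adj_def vec_eq_iff)

lemma adj_diff: "adj (M - N) = adj M - adj N"
  by (simp add: adj_def vec_eq_iff)

lemma adj_mat: "adj (mat c) = mat (cnj c)"
  by (simp add: adj_def vec_eq_iff mat_def)

lemma adj_kron: "adj (kron M N) = kron (adj M) (adj N)"
  by (simp add: adj_def vec_eq_iff kron_def)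

lemma inner_matrix_vector_mult_adj:
  fixes M :: "complex^'n::finite^'n"
  shows "inner x (M *v y) = inner (adj M *v x) y"
proof -
  have "inner x (M *v y) = Re (\<Sum>i\<in>UNIV. \<Sum>j\<in>UNIV. cnj (x$i) * (M$i$j * y$j))"
    by (simp add: inner_vec_def matrix_vector_mult_def inner_complex_cnj Re_sum sum_distrib_left)
  also have "\<dots> = Re (\<Sum>j\<in>UNIV. \<Sum>i\<in>UNIV. cnj (x$i) * (M$i$j * y$j))"
    by (subst sum.swap) simp
  also have "\<dots> = Re (\<Sum>j\<in>UNIV. cnj (\<Sum>i\<in>UNIV. cnj (M$i$j) * x$i) * y$j)"
    by (rule arg_cong[where f=Re]) (simp add: sum_distrib_left sum_distrib_right mult_ac)
  also have "\<dots> = inner (adj M *v x) y"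
    unfolding inner_vec_def inner_complex_cnj Re_sum[symmetric]
    by (simp add: matrix_vector_mult_def adj_def)
  finally show ?thesis .
qed

lemma inner_self_add_adj:
  fixes M :: "complex^'n::finite^'n"
  shows "inner x ((M + adj M) *v x) = 2 * inner x (M *v x)"
  using inner_matrix_vector_mult_adj[of x "adj M" x]
  by (simp add: matrix_vector_mult_add_rdistrib inner_add_right inner_commute)

lemma norm_matrix_vector_mult_involution:
  fixes G :: "complex^'n::finite^'n"
  assumes "adj G = G" "G ** G = mat 1"
  shows "norm (G *v v) = norm v"
proof -
  have "inner (G *v v) (G *v v) = inner v v"
    using inner_matrix_vector_mult_adj[of "G *v v" G v] assms by (simp add: matrix_vector_mul_assoc)
  then show ?thesis by (simp add: norm_eq_sqrt_inner)
qed

lemma matrix_vector_mult_sum_rdistrib: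
  "(sum f S) *v (x::'a::comm_ring_1^'n::finite) = (\<Sum>i\<in>S. f i *v x)"
  by (induct S rule: infinite_finite_induct) (auto simp: matrix_vector_mult_add_rdistrib)

lemma matrix_vector_mult_mat: "(mat c :: complex^'n::finite^'n) *v x = c *s x"
  by (simp add: vec_eq_iff matrix_vector_mult_def mat_def if_distrib if_distribR cong: if_cong)

lemma matrix_mult_shift_entry:
  fixes A B :: "complex^'n::finite^'n"
  shows "((A - mat a) ** (B - mat b)) $ i $ j
    = (A ** B)$i$j - b * A$i$j - a * B$i$j + (if i = j then a * b else 0)"
proof -
  have "((A - mat a) ** (B - mat b)) $ i $ j = (\<Sum>k\<in>UNIV. A$i$k * B$k$j - (if k = j then b * A$i$k else 0)
       - (if i = k then a * B$k$j else 0) + (if i = k then (if k = j then a * b else 0) else 0))"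
    unfolding matrix_matrix_mult_def mat_def by (simp, intro sum.cong refl) (auto simp: algebra_simps)
  also have "\<dots> = (A ** B)$i$j - b * A$i$j - a * B$i$j + (if i = j then a * b else 0)"
    by (simp add: sum.distrib sum_subtractf matrix_matrix_mult_def)
  finally show ?thesis .
qed

lemma commutator_shift:
  fixes A B :: "complex^'n::finite^'n"
  shows "(A - mat a) ** (B - mat b) - (B - mat b) ** (A - mat a) = A ** B - B ** A"
  by (simp add: vec_eq_iff matrix_mult_shift_entry algebra_simps)

lemma bounded_linear_matrix_vector_mult: "bounded_linear (\<lambda>x. (M::complex^'n::finite^'n) *v x)"
  using linear_conv_bounded_linear matrix_vector_mul_linear by blast

lemma norm_matrix_vector_mult_le_opnorm: "norm ((M::complex^'n::finite^'n) *v x) \<le> opnorm M * norm x"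
  unfolding opnorm_def by (rule onorm[OF bounded_linear_matrix_vector_mult])

lemma opnorm_nonneg: "opnorm (M::complex^'n::finite^'n) \<ge> 0"
  unfolding opnorm_def by (rule onorm_pos_le[OF bounded_linear_matrix_vector_mult])

lemma inner_matrix_vector_mult_le_opnorm:
  fixes M :: "complex^'n::finite^'n"
  assumes "norm x = 1"
  shows "inner x (M *v x) \<le> opnorm M"
proof -
  have "inner x (M *v x) \<le> norm x * norm (M *v x)" by (rule norm_cauchy_schwarz)
  also have "\<dots> \<le> opnorm M" using norm_matrix_vector_mult_le_opnorm[of M x] assms by simp
  finally show ?thesis .
qed

lemma sigma_min_le:
  fixes M :: "complex^'n::finite^'n"
  assumes "norm x = 1"
  shows "sigma_min M \<le> norm (M *v x)"
  unfolding sigma_min_def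
  by (rule cInf_lower) (use assms in \<open>auto intro!: bdd_belowI[of _ 0]\<close>)

definition vec_tensor :: "complex^'a \<Rightarrow> complex^'b \<Rightarrow> complex^('a \<times> 'b)" where
  "vec_tensor u v = (\<chi> p. u $ fst p * v $ snd p)"

lemma kron_matrix_vector_mult_tensor:
  fixes M :: "complex^'a::finite^'a" and N :: "complex^'b::finite^'b"
  shows "kron M N *v vec_tensor u v = vec_tensor (M *v u) (N *v v)"
  by (simp add: vec_eq_iff kron_def vec_tensor_def matrix_vector_mult_def sum_product
      UNIV_Times_UNIV[symmetric] sum.cartesian_product case_prod_unfold mult_ac del: UNIV_Times_UNIV)

lemma kron_matrix_mult:
  fixes M M' :: "complex^'a::finite^'a" and N N' :: "complex^'b::finite^'b"
  shows "kron (M ** M') (N ** N') = kron M N ** kron M' N'"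
  by (simp add: vec_eq_iff kron_def matrix_matrix_mult_def sum_product
      UNIV_Times_UNIV[symmetric] sum.cartesian_product case_prod_unfold mult_ac del: UNIV_Times_UNIV)

lemma kron_diff_left: "kron (M - M') N = kron M N - kron M' N"
  by (simp add: vec_eq_iff kron_def algebra_simps)

lemma kron_uminus_right: "kron M (- N) = - kron M N"
  by (simp add: vec_eq_iff kron_def)

lemma norm_sq_vec: "(norm (x::complex^'a::finite))\<^sup>2 = (\<Sum>i\<in>UNIV. (cmod (x$i))\<^sup>2)"
  by (simp add: power2_norm_eq_inner inner_vec_def)

lemma norm_vec_tensor:
  fixes u :: "complex^'a::finite" and v :: "complex^'b::finite"
  shows "norm (vec_tensor u v) = norm u * norm v"
proof -
  have "(norm (vec_tensor u v))\<^sup>2 = (norm u * norm v)\<^sup>2"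
    by (simp add: norm_sq_vec vec_tensor_def power_mult_distrib norm_mult sum_product
      UNIV_Times_UNIV[symmetric] sum.cartesian_product case_prod_unfold del: UNIV_Times_UNIV)
  then show ?thesis by (simp add: power2_eq_iff_nonneg)
qed

lemma norm_sum_squared:
  fixes v :: "nat \<Rightarrow> 'a::real_inner"
  shows "(norm (\<Sum>i<d. v i))\<^sup>2
    = (\<Sum>i<d. (norm (v i))\<^sup>2) + (\<Sum>i<d. \<Sum>k<d. if i \<noteq> k then inner (v i) (v k) else 0)"
proof -
  have "(norm (\<Sum>i<d. v i))\<^sup>2 = (\<Sum>i<d. \<Sum>k<d. inner (v i) (v k))"
    by (simp add: power2_norm_eq_inner inner_sum_left inner_sum_right) (rule sum.swap)
  also have "\<dots> = (\<Sum>i<d. \<Sum>k<d. (if i = k then inner (v i) (v k) else 0)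
                                  + (if i \<noteq> k then inner (v i) (v k) else 0))"
    by (intro sum.cong refl) simp
  also have "\<dots> = (\<Sum>i<d. (norm (v i))\<^sup>2) + (\<Sum>i<d. \<Sum>k<d. if i \<noteq> k then inner (v i) (v k) else 0)"
    by (simp add: sum.distrib power2_norm_eq_inner)
  finally show ?thesis .
qed

lemma norm_add_diff_squared_orthogonal:
  fixes s w u :: "'a::real_inner"
  assumes "inner w u = 0"
  shows "(norm (s + w - u))\<^sup>2 = (norm s)\<^sup>2 + (norm w)\<^sup>2 + (norm u)\<^sup>2 + 2 * inner s w - 2 * inner s u"
  using assms unfolding power2_norm_eq_inner
  by (simp add: inner_add_left inner_add_right inner_diff_left inner_diff_right inner_commute algebra_simps)

text \<open>Any coordinate of each block would do; \<open>undefined\<close> just names one.\<close>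

definition pq_balanced :: "complex^('m::finite + 'm)" where
  "pq_balanced = (\<chi> j. if j = Inl undefined \<or> j = Inr undefined then complex_of_real (1 / sqrt 2) else 0)"

lemma Pblk_matrix_vector_mult_nth:
  "(Pblk *v x) $ j = (if \<exists>l. j = Inl l then x $ j else 0)"
proof -
  have "(Pblk *v x) $ j = (\<Sum>k\<in>UNIV. if j = k then (if \<exists>l. j = Inl l then x $ k else 0) else 0)"
    unfolding matrix_vector_mult_def Pblk_def vec_lambda_beta by (intro sum.cong refl) auto
  then show ?thesis by simp
qed

lemma Qblk_matrix_vector_mult_nth:
  "(Qblk *v x) $ j = (if \<exists>l. j = Inr l then x $ j else 0)"
proof -
  have "(Qblk *v x) $ j = (\<Sum>k\<in>UNIV. if j = k then (if \<exists>l. j = Inr l then x $ k else 0) else 0)"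
    unfolding matrix_vector_mult_def Qblk_def vec_lambda_beta by (intro sum.cong refl) auto
  then show ?thesis by simp
qed

lemma norm_pq_balanced: "norm (pq_balanced :: complex^('m::finite + 'm)) = 1"
proof -
  have "(norm (pq_balanced :: complex^('m + 'm)))\<^sup>2
      = (\<Sum>j\<in>UNIV. (if j = (Inl undefined :: 'm + 'm) then 1/2 else 0)
                  + (if j = (Inr undefined :: 'm + 'm) then 1/2 else (0::real)))"
    unfolding norm_sq_vec pq_balanced_def vec_lambda_beta
    by (rule sum.cong[OF refl]) (auto simp add: norm_divide power_divide)
  also have "\<dots> = 1" by (simp add: sum.distrib)
  finally show ?thesis using norm_ge_zero[of "pq_balanced :: complex^('m + 'm)"]
    by (auto simp add: power2_eq_1_iff)
qed

lemma norm_Pblk_pq_balanced_squared: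
  "(norm (Pblk *v (pq_balanced :: complex^('m::finite + 'm))))\<^sup>2 = 1/2"
proof -
  have "(norm (Pblk *v (pq_balanced :: complex^('m + 'm))))\<^sup>2
      = (\<Sum>j\<in>UNIV. if j = (Inl undefined :: 'm + 'm) then 1/2 else (0::real))"
    unfolding norm_sq_vec Pblk_matrix_vector_mult_nth
    by (rule sum.cong[OF refl]) (auto simp: pq_balanced_def norm_divide power_divide)
  then show ?thesis by simp
qed

lemma norm_Qblk_pq_balanced_squared:
  "(norm (Qblk *v (pq_balanced :: complex^('m::finite + 'm))))\<^sup>2 = 1/2"
proof -
  have "(norm (Qblk *v (pq_balanced :: complex^('m + 'm))))\<^sup>2
      = (\<Sum>j\<in>UNIV. if j = (Inr undefined :: 'm + 'm) then 1/2 else (0::real))"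
    unfolding norm_sq_vec Qblk_matrix_vector_mult_nth
    by (rule sum.cong[OF refl]) (auto simp: pq_balanced_def norm_divide power_divide)
  then show ?thesis by simp
qed

lemma inner_kron_Pblk_Qblk:
  fixes M N :: "complex^'n::finite^'n"
  shows "inner (kron M Pblk *v x) (kron N Qblk *v y) = 0"
proof -
  have "inner ((kron M Pblk *v x) $ (a, s)) ((kron N Qblk *v y) $ (a, s)) = 0" for a s
    by (cases s) (simp_all add: matrix_vector_mult_def kron_def Pblk_def Qblk_def)
  then have "inner ((kron M Pblk *v x) $ p) ((kron N Qblk *v y) $ p) = 0" for p
    by (cases p) simp
  then show ?thesis by (simp add: inner_vec_def)
qed

lemma kron_anticommutator:
  fixes X Y :: "complex^'a::finite^'a" and G G' :: "complex^'b::finite^'b"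
  assumes "G' ** G = - (G ** G')"
  shows "kron X G ** kron Y G' + kron Y G' ** kron X G = kron (X ** Y - Y ** X) (G ** G')"
  by (simp add: kron_matrix_mult[symmetric] assms kron_uminus_right kron_diff_left)

lemma inner_hermitian_anticommutator:
  fixes K K' :: "complex^'n::finite^'n"
  assumes "adj K = K" "adj K' = K'"
  shows "2 * inner (K *v x) (K' *v x) = inner x ((K ** K' + K' ** K) *v x)"
  using inner_matrix_vector_mult_adj[of x K "K' *v x"] inner_matrix_vector_mult_adj[of x K' "K *v x"]
  by (simp add: assms matrix_vector_mult_add_rdistrib matrix_vector_mul_assoc inner_add_right inner_commute)

lemma inner_clifford_cross_le:
  fixes \<Gamma> :: "nat \<Rightarrow> complex^('m::finite + 'm)^('m::finite + 'm)"
    and X :: "nat \<Rightarrow> complex^'n::finite^'n"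
  assumes "is_clifford d \<Gamma>" "i < d" "k < d" "i \<noteq> k"
    and "adj (X i) = X i" "adj (X k) = X k"
    and "norm \<psi> = 1" "norm e = 1"
  shows "2 * inner (kron (X i) (\<Gamma> i) *v vec_tensor \<psi> e) (kron (X k) (\<Gamma> k) *v vec_tensor \<psi> e)
    \<le> opnorm (X i ** X k - X k ** X i)"
proof -
  note cl = assms(1)[unfolded is_clifford_def]
  have \<Gamma>i: "adj (\<Gamma> i) = \<Gamma> i" "\<Gamma> i ** \<Gamma> i = mat 1" and \<Gamma>k: "adj (\<Gamma> k) = \<Gamma> k" "\<Gamma> k ** \<Gamma> k = mat 1"
    using cl assms(2,3) by blast+
  have anti: "\<Gamma> k ** \<Gamma> i = - (\<Gamma> i ** \<Gamma> k)" using cl assms(2-4) by blast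
  define C where "C = X i ** X k - X k ** X i"
  define \<phi> where "\<phi> = vec_tensor \<psi> e"
  have norm_\<phi>: "norm \<phi> = 1" using assms(7,8) by (simp add: \<phi>_def norm_vec_tensor)
  have "2 * inner (kron (X i) (\<Gamma> i) *v \<phi>) (kron (X k) (\<Gamma> k) *v \<phi>)
      = inner \<phi> (kron C (\<Gamma> i ** \<Gamma> k) *v \<phi>)"
    by (simp add: inner_hermitian_anticommutator adj_kron assms(5,6) \<Gamma>i \<Gamma>k
        kron_anticommutator[OF anti] C_def)
  also have "\<dots> \<le> norm \<phi> * norm (kron C (\<Gamma> i ** \<Gamma> k) *v \<phi>)"
    by (rule norm_cauchy_schwarz)
  also have "\<dots> = norm (C *v \<psi>)"
    using norm_\<phi> assms(8)
    by (simp add: \<phi>_def kron_matrix_vector_mult_tensor norm_vec_tensor matrix_vector_mul_assoc[symmetric]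
        norm_matrix_vector_mult_involution[OF \<Gamma>i] norm_matrix_vector_mult_involution[OF \<Gamma>k])
  also have "\<dots> \<le> opnorm C"
    using norm_matrix_vector_mult_le_opnorm[of C \<psi>] assms(7) by simp
  finally show ?thesis by (simp add: \<phi>_def C_def)
qed

lemma norm_clifford_sum_squared_le:
  fixes \<Gamma> :: "nat \<Rightarrow> complex^('m::finite + 'm)^('m::finite + 'm)"
    and X :: "nat \<Rightarrow> complex^'n::finite^'n"
  assumes "is_clifford d \<Gamma>" "\<forall>i<d. adj (X i) = X i" "norm \<psi> = 1" "norm e = 1"
  shows "(norm (\<Sum>i<d. kron (X i) (\<Gamma> i) *v vec_tensor \<psi> e))\<^sup>2
    \<le> (\<Sum>i<d. (norm (X i *v \<psi>))\<^sup>2)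
      + (\<Sum>i<d. \<Sum>k<d. if i \<noteq> k then opnorm (X i ** X k - X k ** X i) else 0)"
proof -
  have norm_summand: "norm (kron (X i) (\<Gamma> i) *v vec_tensor \<psi> e) = norm (X i *v \<psi>)" if "i < d" for i
    using assms(1,4) that
    by (simp add: is_clifford_def kron_matrix_vector_mult_tensor norm_vec_tensor
        norm_matrix_vector_mult_involution)
  have cross: "inner (kron (X i) (\<Gamma> i) *v vec_tensor \<psi> e) (kron (X k) (\<Gamma> k) *v vec_tensor \<psi> e)
      \<le> opnorm (X i ** X k - X k ** X i)" if "i < d" "k < d" "i \<noteq> k" for i k
    using inner_clifford_cross_le[OF assms(1) that, of X \<psi> e] assms(2-4) that
      opnorm_nonneg[of "X i ** X k - X k ** X i"]
    by simp
  show ?thesis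
    unfolding norm_sum_squared
    by (intro add_mono sum_mono) (auto simp: norm_summand cross)
qed

lemma inner_Fmat:
  fixes \<Gamma> :: "nat \<Rightarrow> complex^('m::finite + 'm)^('m::finite + 'm)"
    and A :: "nat \<Rightarrow> complex^'n::finite^'n" and lam :: "nat \<Rightarrow> real"
    and \<phi> :: "complex^('n \<times> ('m + 'm))"
  assumes "is_clifford d \<Gamma>" "\<forall>i<d. adj (A i) = A i"
  defines "S \<equiv> (\<Sum>i<d. kron (A i - mat (complex_of_real (lam i))) (\<Gamma> i) *v \<phi>)"
  shows "inner \<phi> (Fmat d \<Gamma> A B lam \<nu> *v \<phi>)
    = 2 * inner S (kron (B - mat \<nu>) Pblk *v \<phi>) - 2 * inner S (kron (adj (B - mat \<nu>)) Qblk *v \<phi>)"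
proof -
  define K where "K i = kron (A i - mat (complex_of_real (lam i))) (\<Gamma> i)" for i
  define W :: "complex^('n \<times> ('m + 'm))^('n \<times> ('m + 'm))" where "W = kron (B - mat \<nu>) Pblk"
  define V :: "complex^('n \<times> ('m + 'm))^('n \<times> ('m + 'm))" where "V = kron (adj (B - mat \<nu>)) Qblk"
  have K_hermitian: "adj (K i) = K i" if "i < d" for i
    using assms(1,2) that by (simp add: is_clifford_def K_def adj_kron adj_diff adj_mat)
  have inner_K: "inner \<phi> ((K i ** M + adj (K i ** M)) *v \<phi>) = 2 * inner (K i *v \<phi>) (M *v \<phi>)"
    if "i < d" for i M
    using inner_matrix_vector_mult_adj[of \<phi> "K i" "M *v \<phi>"]
    by (simp add: inner_self_add_adj K_hermitian[OF that] matrix_vector_mul_assoc)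
  have "Fmat d \<Gamma> A B lam \<nu> = (\<Sum>i<d. K i ** W + adj (K i ** W)) - (\<Sum>i<d. K i ** V + adj (K i ** V))"
    by (simp add: Fmat_def Let_def K_def W_def V_def kron_matrix_mult)
  then have "inner \<phi> (Fmat d \<Gamma> A B lam \<nu> *v \<phi>)
      = (\<Sum>i<d. inner \<phi> ((K i ** W + adj (K i ** W)) *v \<phi>))
        - (\<Sum>i<d. inner \<phi> ((K i ** V + adj (K i ** V)) *v \<phi>))"
    by (simp add: matrix_vector_mult_diff_rdistrib matrix_vector_mult_sum_rdistrib
        inner_diff_right inner_sum_right)
  also have "\<dots> = 2 * inner S (W *v \<phi>) - 2 * inner S (V *v \<phi>)"
    unfolding S_def K_def[symmetric] inner_sum_left sum_distrib_left
    by (intro arg_cong2[where f=minus] sum.cong refl) (simp_all add: inner_K)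
  finally show ?thesis by (simp add: W_def V_def)
qed

lemma norm_localizer_squared:
  fixes \<Gamma> :: "nat \<Rightarrow> complex^('m::finite + 'm)^('m::finite + 'm)"
    and A :: "nat \<Rightarrow> complex^'n::finite^'n" and lam :: "nat \<Rightarrow> real"
    and \<psi> :: "complex^'n"
  assumes "is_clifford d \<Gamma>" "\<forall>i<d. adj (A i) = A i"
  defines "\<phi> \<equiv> vec_tensor \<psi> pq_balanced"
    and "S \<equiv> (\<Sum>i<d. kron (A i - mat (complex_of_real (lam i))) (\<Gamma> i) *v vec_tensor \<psi> pq_balanced)"
  shows "(norm (localizer d \<Gamma> A B lam \<nu> *v \<phi>))\<^sup>2
    = (norm S)\<^sup>2 + (norm ((B - mat \<nu>) *v \<psi>))\<^sup>2 / 2 + (norm (adj (B - mat \<nu>) *v \<psi>))\<^sup>2 / 2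
      + inner \<phi> (Fmat d \<Gamma> A B lam \<nu> *v \<phi>)"
proof -
  define W :: "complex^('n \<times> ('m + 'm))^('n \<times> ('m + 'm))" where "W = kron (B - mat \<nu>) Pblk"
  define V :: "complex^('n \<times> ('m + 'm))^('n \<times> ('m + 'm))" where "V = kron (adj (B - mat \<nu>)) Qblk"
  have "localizer d \<Gamma> A B lam \<nu> *v \<phi> = S + W *v \<phi> - V *v \<phi>"
    by (simp add: localizer_def S_def W_def V_def \<phi>_def matrix_vector_mult_sum_rdistrib
        matrix_vector_mult_add_rdistrib matrix_vector_mult_diff_rdistrib)
  moreover have "(norm (W *v \<phi>))\<^sup>2 = (norm ((B - mat \<nu>) *v \<psi>))\<^sup>2 / 2"
    by (simp add: W_def \<phi>_def kron_matrix_vector_mult_tensor norm_vec_tensor power_mult_distrib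
        norm_Pblk_pq_balanced_squared)
  moreover have "(norm (V *v \<phi>))\<^sup>2 = (norm (adj (B - mat \<nu>) *v \<psi>))\<^sup>2 / 2"
    by (simp add: V_def \<phi>_def kron_matrix_vector_mult_tensor norm_vec_tensor power_mult_distrib
        norm_Qblk_pq_balanced_squared)
  ultimately show ?thesis
    using norm_add_diff_squared_orthogonal[of "W *v \<phi>" "V *v \<phi>" S]
    by (simp add: inner_kron_Pblk_Qblk W_def V_def inner_Fmat[OF assms(1,2)] S_def \<phi>_def)
qed

theorem mainTheorem3:
  fixes d :: nat
    and \<Gamma> :: "nat \<Rightarrow> complex^('m::finite + 'm)^('m::finite + 'm)"
    and A :: "nat \<Rightarrow> complex^'n::finite^'n"
    and B :: "complex^'n::finite^'n"
    and lam :: "nat \<Rightarrow> real" and \<nu> :: complex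
    and \<psi> :: "complex^'n"
    and \<epsilon>1 \<epsilon>2 :: real
  assumes "d \<ge> 1"
    and "is_clifford d \<Gamma>"
    and "\<forall>i<d. adj (A i) = A i"
    and "norm \<psi> = 1"
    and "2 * (\<Sum>i<d. (norm (A i *v \<psi> - complex_of_real (lam i) *s \<psi>))\<^sup>2)
         + (norm (B *v \<psi> - \<nu> *s \<psi>))\<^sup>2 + (norm (adj B *v \<psi> - cnj \<nu> *s \<psi>))\<^sup>2 \<le> \<epsilon>1"
    and "(\<Sum>i<d. \<Sum>k<d. if i \<noteq> k then opnorm (A i ** A k - A k ** A i) else 0)
         + opnorm (Fmat d \<Gamma> A B lam \<nu>) \<le> \<epsilon>2"
    and "\<epsilon>1 \<ge> 0" and "\<epsilon>2 \<ge> 0"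
  shows "(lam, \<nu>) \<in> clifford_radial_pseudospectrum d \<Gamma> A B (sqrt (\<epsilon>1 / sqrt 2 + \<epsilon>2))"
proof -
  define X where "X i = A i - mat (complex_of_real (lam i))" for i
  define \<phi> :: "complex^('n \<times> ('m + 'm))" where "\<phi> = vec_tensor \<psi> pq_balanced"
  define L where "L = localizer d \<Gamma> A B lam \<nu>"
  have norm_\<phi>: "norm \<phi> = 1"
    using assms(4) by (simp add: \<phi>_def norm_vec_tensor norm_pq_balanced)
  have X_hermitian: "\<forall>i<d. adj (X i) = X i"
    using assms(3) by (simp add: X_def adj_diff adj_mat)
  have X_commutator: "X i ** X k - X k ** X i = A i ** A k - A k ** A i" for i k
    by (simp add: X_def commutator_shift)
  have X_\<psi>: "X i *v \<psi> = A i *v \<psi> - complex_of_real (lam i) *s \<psi>" for i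
    by (simp add: X_def matrix_vector_mult_diff_rdistrib matrix_vector_mult_mat)
  have "(norm (\<Sum>i<d. kron (X i) (\<Gamma> i) *v \<phi>))\<^sup>2
      \<le> (\<Sum>i<d. (norm (A i *v \<psi> - complex_of_real (lam i) *s \<psi>))\<^sup>2)
        + (\<Sum>i<d. \<Sum>k<d. if i \<noteq> k then opnorm (A i ** A k - A k ** A i) else 0)"
    using norm_clifford_sum_squared_le[OF assms(2) X_hermitian assms(4) norm_pq_balanced]
    unfolding \<phi>_def X_commutator X_\<psi> .
  moreover have "inner \<phi> (Fmat d \<Gamma> A B lam \<nu> *v \<phi>) \<le> opnorm (Fmat d \<Gamma> A B lam \<nu>)"
    using norm_\<phi> by (rule inner_matrix_vector_mult_le_opnorm)
  ultimately have "(norm (L *v \<phi>))\<^sup>2 \<le> \<epsilon>1 / 2 + \<epsilon>2"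
    using norm_localizer_squared[OF assms(2,3), where lam = lam and \<psi> = \<psi> and B = B and \<nu> = \<nu>] assms(5,6)
    by (simp add: L_def \<phi>_def X_def adj_diff adj_mat matrix_vector_mult_diff_rdistrib matrix_vector_mult_mat)
  also have "\<dots> \<le> \<epsilon>1 / sqrt 2 + \<epsilon>2"
  proof -
    have "sqrt 2 \<le> (2::real)" using real_sqrt_le_iff[of 2 4] by simp
    then show ?thesis using assms(7) by (intro add_right_mono divide_left_mono) auto
  qed
  finally have "norm (L *v \<phi>) \<le> sqrt (\<epsilon>1 / sqrt 2 + \<epsilon>2)"
    by (rule real_le_rsqrt)
  then show ?thesis
    using sigma_min_le[OF norm_\<phi>, of L]
    by (simp add: clifford_radial_pseudospectrum_def clifford_radial_gap_def L_def)
qed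

end
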